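(* Consider an infinite execution $\gamma_0\gamma_1\ldots$ of the unison dynamics with $\gamma_0$ satisfying $WU_0$, in which every process increments its clock infinitely often, and let $\bot_0$ and the cuts $C_k$ be as in the context. Let $k\ge\bot_0+D$ and $\varrho\ge 1$ be integers. Then $C_k$ and $C_{k+\varrho}$ are coherent cuts with $C_k\preceq C_{k+\varrho}$, and the segment $[C_k,C_{k+\varrho}]$, with the events of $C_{k+\varrho}$ taken as decide events, is a $\varrho$-wavelet.
   Context: Let $G=(V,E)$ be a finite connected undirected graph, $|V|=n\ge 2$, $\mathcal N_p$ the set of neighbors of $p$, $d(p,q)$ the hop distance, $D$ the diameter, and $V(p,r)=\{q\in V: d(p,q)\le r\}$. Fix an integer $M\ge 3$; for an integer $a$, $\bar a\in\{0,\dots,M-1\}$ denotes its residue modulo $M$. Each process $p$ holds a clock $p.r\in\{0,\dots,M-1\}$; $p^t.r$ denotes its value in configuration $\gamma_t$. Integers $a,b$ are locally comparable if $\min(\overline{a-b},\overline{b-a})\le 1$, and then $b\ominus a=\overline{b-a}$ if $\overline{b-a}\le 1$, and $b\ominus a=-\overline{a-b}$ otherwise. A configuration satisfies $WU$ if for every edge $\{p,q\}$, $p.r$ and $q.r$ are locally comparable. The delay of a path $\mu=p_0p_1\ldots p_k$ is $\delta_\mu=\sum_{i=0}^{k-1}(p_{i+1}.r\ominus p_i.r)$ ($0$ if $k=0$). A configuration satisfies $WU_0$ if it satisfies $WU$ and the delay is intrinsic: for all $p,q$, all paths from $p$ to $q$ have the same delay, denoted $\delta_{(p,q)}$ ($\delta^t_{(p,q)}$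 in $\gamma_t$). Dynamics: a process $p$ is enabled iff for every $q\in\mathcal N_p$, $q.r=p.r$ or $q.r=\overline{p.r+1}$. In a transition $\gamma_t\to\gamma_{t+1}$ a nonempty set of processes enabled in $\gamma_t$ is chosen (by an arbitrary, possibly unfair, daemon) and each of them sets $p.r:=\overline{p.r+1}$; other clocks are unchanged. Events: $(p,0)$ is an event for every $p$; $(p,t+1)$ is an event iff $p$ increments in $\gamma_t\to\gamma_{t+1}$. Causal relation $\leadsto$: for an event $(p,t)$ with $t>0$, $(p,t')\leadsto(p,t)$ where $t'$ is the largest time $<t$ such that $(p,t')$ is an event, and for each $q\in\mathcal N_p$, $(q,t')\leadsto(p,t)$ where $t'$ is the largest time $<t$ such that $(q,t')$ is an event. $\preceq$ is the reflexive–transitive closure of $\leadsto$. Lifting: assume $\gamma_0$ satisfies $WU_0$. Choose $p_0$ with $\delta^0_{(p_0,q)}\ge 0$ for all $q\in V$, and let $\bot_0=p_0^0.r$. Define integers $\widetilde{p^t.r}$ by $\widetilde{p^0.r}=\bot_0+\delta^0_{(p_0,p)}$, and $\widetilde{p^{t+1}.r}=\widetilde{p^t.r}+1$ if $p$ increments in $\gamma_t\to\gamma_{t+1}$, $\widetilde{p^{t+1}.r}=\widetilde{p^t.r}$ otherwise. For an integer $k$, $t_{p,k}$ is the smallest $t$ with $\widetilde{p^t.r}=k$, and $C_k=\{(p,t_{p,k}):p\in V\}$. A cut is a map $C:p\mapsto t^C_p$ (identified with $\{(p,t^C_p)\}$) with each $(p,t^C_p)$ an event. $C$ is coherent if whenever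 $(q,t')\preceq(p,t)\preceq(p,t^C_p)$, then $(q,t')\preceq(q,t^C_q)$. For cuts, $C\preceq C'$ means every event $(p,t)$ with $t\le t^C_p$ satisfies $t\le t^{C'}_p$. For coherent cuts $C\preceq C'$, the segment $[C,C']$ is the set of events $(p,t)$ with $(p,t^C_p)\preceq(p,t)\preceq(p,t^{C'}_p)$. A $\varrho$-wavelet is a segment $[C,C']$ together with a designated nonempty set of decide events in it such that for every decide event $(p,t)$, every process $q\in V(p,\varrho)$ has an event $(q,t')\in[C,C']$ with $(q,t')\preceq(p,t)$. *)

theory Defs
  imports Main
begin

definition walk :: "'v set \<Rightarrow> ('v \<Rightarrow> 'v \<Rightarrow> bool) \<Rightarrow> 'v \<Rightarrow> 'v \<Rightarrow> 'v list \<Rightarrow> bool" where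
  "walk V E p q xs \<longleftrightarrow> xs \<noteq> [] \<and> hd xs = p \<and> last xs = q \<and> set xs \<subseteq> V \<and> successively E xs"

definition graph_ok :: "'v set \<Rightarrow> ('v \<Rightarrow> 'v \<Rightarrow> bool) \<Rightarrow> bool" where
  "graph_ok V E \<longleftrightarrow> finite V \<and> card V \<ge> 2 \<and>
     (\<forall>p q. E p q \<longrightarrow> p \<in> V \<and> q \<in> V) \<and>
     (\<forall>p q. E p q \<longrightarrow> E q p) \<and> (\<forall>p. \<not> E p p) \<and>
     (\<forall>p\<in>V. \<forall>q\<in>V. \<exists>xs. walk V E p q xs)"

definition hop_dist :: "'v set \<Rightarrow> ('v \<Rightarrow> 'v \<Rightarrow> bool) \<Rightarrow> 'v \<Rightarrow> 'v \<Rightarrow> nat" where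
  "hop_dist V E p q = (LEAST n. \<exists>xs. walk V E p q xs \<and> length xs = Suc n)"

definition diameter :: "'v set \<Rightarrow> ('v \<Rightarrow> 'v \<Rightarrow> bool) \<Rightarrow> nat" where
  "diameter V E = Max {hop_dist V E p q | p q. p \<in> V \<and> q \<in> V}"

definition loc_comp :: "nat \<Rightarrow> int \<Rightarrow> int \<Rightarrow> bool" where
  "loc_comp M a b \<longleftrightarrow> min ((a - b) mod int M) ((b - a) mod int M) \<le> 1"

definition ominus :: "nat \<Rightarrow> int \<Rightarrow> int \<Rightarrow> int" where
  "ominus M b a = (if (b - a) mod int M \<le> 1 then (b - a) mod int M else - ((a - b) mod int M))"

fun delay :: "nat \<Rightarrow> ('v \<Rightarrow> nat) \<Rightarrow> 'v list \<Rightarrow> int" where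
  "delay M c [] = 0"
| "delay M c [x] = 0"
| "delay M c (x # y # xs) = ominus M (int (c y)) (int (c x)) + delay M c (y # xs)"

definition WU :: "'v set \<Rightarrow> ('v \<Rightarrow> 'v \<Rightarrow> bool) \<Rightarrow> nat \<Rightarrow> ('v \<Rightarrow> nat) \<Rightarrow> bool" where
  "WU V E M c \<longleftrightarrow> (\<forall>p q. E p q \<longrightarrow> loc_comp M (int (c p)) (int (c q)))"

definition WU0 :: "'v set \<Rightarrow> ('v \<Rightarrow> 'v \<Rightarrow> bool) \<Rightarrow> nat \<Rightarrow> ('v \<Rightarrow> nat) \<Rightarrow> bool" where
  "WU0 V E M c \<longleftrightarrow> WU V E M c \<and>
     (\<forall>p q xs ys. walk V E p q xs \<longrightarrow> walk V E p q ys \<longrightarrow> delay M c xs = delay M c ys)"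

text \<open>Intrinsic delay (meaningful under WU0 on a connected graph).\<close>
definition idelay :: "'v set \<Rightarrow> ('v \<Rightarrow> 'v \<Rightarrow> bool) \<Rightarrow> nat \<Rightarrow> ('v \<Rightarrow> nat) \<Rightarrow> 'v \<Rightarrow> 'v \<Rightarrow> int" where
  "idelay V E M c p q = delay M c (SOME xs. walk V E p q xs)"

definition enabled :: "('v \<Rightarrow> 'v \<Rightarrow> bool) \<Rightarrow> nat \<Rightarrow> ('v \<Rightarrow> nat) \<Rightarrow> 'v \<Rightarrow> bool" where
  "enabled E M c p \<longleftrightarrow> (\<forall>q. E p q \<longrightarrow> c q = c p \<or> c q = (c p + 1) mod M)"

definition transition :: "'v set \<Rightarrow> ('v \<Rightarrow> 'v \<Rightarrow> bool) \<Rightarrow> nat \<Rightarrow> ('v \<Rightarrow> nat) \<Rightarrow> 'v set \<Rightarrow> ('v \<Rightarrow> nat) \<Rightarrow> bool" where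
  "transition V E M c S c' \<longleftrightarrow> S \<noteq> {} \<and> S \<subseteq> V \<and> (\<forall>p\<in>S. enabled E M c p) \<and>
     (\<forall>p. c' p = (if p \<in> S then (c p + 1) mod M else c p))"

text \<open>An execution: configurations g t together with the sets sel t of processes
  chosen by the daemon at step t.\<close>
definition execution :: "'v set \<Rightarrow> ('v \<Rightarrow> 'v \<Rightarrow> bool) \<Rightarrow> nat \<Rightarrow> (nat \<Rightarrow> 'v \<Rightarrow> nat) \<Rightarrow> (nat \<Rightarrow> 'v set) \<Rightarrow> bool" where
  "execution V E M g sel \<longleftrightarrow> (\<forall>p\<in>V. g 0 p < M) \<and> (\<forall>t. transition V E M (g t) (sel t) (g (Suc t)))"

definition event :: "'v set \<Rightarrow> (nat \<Rightarrow> 'v set) \<Rightarrow> 'v \<Rightarrow> nat \<Rightarrow> bool" where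
  "event V sel p t \<longleftrightarrow> p \<in> V \<and> (t = 0 \<or> (\<exists>s. t = Suc s \<and> p \<in> sel s))"

definition leadsto :: "'v set \<Rightarrow> ('v \<Rightarrow> 'v \<Rightarrow> bool) \<Rightarrow> (nat \<Rightarrow> 'v set) \<Rightarrow> 'v \<times> nat \<Rightarrow> 'v \<times> nat \<Rightarrow> bool" where
  "leadsto V E sel a b \<longleftrightarrow> (case a of (q, t') \<Rightarrow> case b of (p, t) \<Rightarrow>
      0 < t \<and> event V sel p t \<and> (q = p \<or> E p q) \<and> t' < t \<and> event V sel q t' \<and>
      (\<forall>s. t' < s \<and> s < t \<longrightarrow> \<not> event V sel q s))"

definition causal :: "'v set \<Rightarrow> ('v \<Rightarrow> 'v \<Rightarrow> bool) \<Rightarrow> (nat \<Rightarrow> 'v set) \<Rightarrow> 'v \<times> nat \<Rightarrow> 'v \<times> nat \<Rightarrow> bool" where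
  "causal V E sel a b \<longleftrightarrow> event V sel (fst a) (snd a) \<and> (leadsto V E sel)\<^sup>*\<^sup>* a b"

fun lifted :: "(nat \<Rightarrow> 'v set) \<Rightarrow> ('v \<Rightarrow> int) \<Rightarrow> 'v \<Rightarrow> nat \<Rightarrow> int" where
  "lifted sel b p 0 = b p"
| "lifted sel b p (Suc t) = lifted sel b p t + (if p \<in> sel t then 1 else 0)"

text \<open>Initial lifted values, given the reference process p0: bot0 + delta(p0,p).\<close>
definition lift_base :: "'v set \<Rightarrow> ('v \<Rightarrow> 'v \<Rightarrow> bool) \<Rightarrow> nat \<Rightarrow> ('v \<Rightarrow> nat) \<Rightarrow> 'v \<Rightarrow> 'v \<Rightarrow> int" where
  "lift_base V E M c p0 p = int (c p0) + idelay V E M c p0 p"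

text \<open>t_{p,k}, i.e. the cut C_k as a map p \<mapsto> t_{p,k}.\<close>
definition Ccut :: "(nat \<Rightarrow> 'v set) \<Rightarrow> ('v \<Rightarrow> int) \<Rightarrow> int \<Rightarrow> 'v \<Rightarrow> nat" where
  "Ccut sel b k p = (LEAST t. lifted sel b p t = k)"

definition is_cut :: "'v set \<Rightarrow> (nat \<Rightarrow> 'v set) \<Rightarrow> ('v \<Rightarrow> nat) \<Rightarrow> bool" where
  "is_cut V sel C \<longleftrightarrow> (\<forall>p\<in>V. event V sel p (C p))"

definition coherent :: "'v set \<Rightarrow> ('v \<Rightarrow> 'v \<Rightarrow> bool) \<Rightarrow> (nat \<Rightarrow> 'v set) \<Rightarrow> ('v \<Rightarrow> nat) \<Rightarrow> bool" where
  "coherent V E sel C \<longleftrightarrow> is_cut V sel C \<and>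
     (\<forall>p\<in>V. \<forall>q\<in>V. \<forall>t t'. causal V E sel (q, t') (p, t) \<longrightarrow> causal V E sel (p, t) (p, C p)
        \<longrightarrow> causal V E sel (q, t') (q, C q))"

definition cut_le :: "'v set \<Rightarrow> (nat \<Rightarrow> 'v set) \<Rightarrow> ('v \<Rightarrow> nat) \<Rightarrow> ('v \<Rightarrow> nat) \<Rightarrow> bool" where
  "cut_le V sel C C' \<longleftrightarrow> (\<forall>p\<in>V. \<forall>t. event V sel p t \<and> t \<le> C p \<longrightarrow> t \<le> C' p)"

definition segment :: "'v set \<Rightarrow> ('v \<Rightarrow> 'v \<Rightarrow> bool) \<Rightarrow> (nat \<Rightarrow> 'v set) \<Rightarrow> ('v \<Rightarrow> nat) \<Rightarrow> ('v \<Rightarrow> nat) \<Rightarrow> ('v \<times> nat) set" where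
  "segment V E sel C C' = {(p, t). p \<in> V \<and> causal V E sel (p, C p) (p, t) \<and> causal V E sel (p, t) (p, C' p)}"

definition wavelet :: "'v set \<Rightarrow> ('v \<Rightarrow> 'v \<Rightarrow> bool) \<Rightarrow> (nat \<Rightarrow> 'v set) \<Rightarrow> nat \<Rightarrow> ('v \<Rightarrow> nat) \<Rightarrow> ('v \<Rightarrow> nat) \<Rightarrow> ('v \<times> nat) set \<Rightarrow> bool" where
  "wavelet V E sel \<rho> C C' Dec \<longleftrightarrow>
     coherent V E sel C \<and> coherent V E sel C' \<and> cut_le V sel C C' \<and>
     Dec \<noteq> {} \<and> Dec \<subseteq> segment V E sel C C' \<and>
     (\<forall>(p, t)\<in>Dec. \<forall>q\<in>V. hop_dist V E p q \<le> \<rho> \<longrightarrow>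
        (\<exists>t'. (q, t') \<in> segment V E sel C C' \<and> causal V E sel (q, t') (p, t)))"

end

theory Submission
  imports Defs
begin

(* Lift the clocks of the execution to unbounded integers: every process p
   starts at b p = bot0 + delta(p0,p) and adds 1 per increment.  Under WU0 these initial
   values are congruent to the clocks modulo M and differ by at most one along edges;
   both properties are invariant, and because M >= 3 they force: when p increments from
   lifted value j-1 to j, every neighbour already has lifted value j-1 or j.  Hence the
   event at which a neighbour q reached j-1 causally precedes the event at which p
   reached j, and by induction along a shortest walk the event at which q reached
   j - d(p,q) precedes the one at which p reached j, provided all initial lifted values
   are at most j - d(p,q); by WU0 they are at most bot0 + D.  Conversely lifted values never decrease along causal chains, which makes
   every cut C_j with j above all initial values coherent. *)

lemma shortest_walk:
  assumes "graph_ok V E" "p \<in> V" "q \<in> V"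
  shows "\<exists>xs. walk V E p q xs \<and> length xs = Suc (hop_dist V E p q)"
proof -
  obtain xs where "walk V E p q xs" using assms unfolding graph_ok_def by blast
  hence "\<exists>n xs. walk V E p q xs \<and> length xs = Suc n"
    by (intro exI[of _ "length xs - 1"] exI[of _ xs]) (auto simp: walk_def)
  thus ?thesis unfolding hop_dist_def by (rule LeastI_ex)
qed

lemma hop_dist_le_diameter:
  assumes "graph_ok V E" "p \<in> V" "q \<in> V"
  shows "hop_dist V E p q \<le> diameter V E"
proof -
  have "{hop_dist V E p q | p q. p \<in> V \<and> q \<in> V} = (\<lambda>(p, q). hop_dist V E p q) ` (V \<times> V)"
    by auto
  hence "finite {hop_dist V E p q | p q. p \<in> V \<and> q \<in> V}"
    using assms(1) by (simp add: graph_ok_def)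
  thus ?thesis unfolding diameter_def by (rule Max_ge) (use assms in blast)
qed

lemma walk_snoc: "walk V E p q xs \<Longrightarrow> E q y \<Longrightarrow> y \<in> V \<Longrightarrow> walk V E p y (xs @ [y])"
  unfolding walk_def by (auto simp: successively_append_iff)

section \<open>Delays modulo M\<close>

lemma ominus_mod: "ominus M y x mod int M = (y - x) mod int M"
  unfolding ominus_def by (simp add: mod_minus_eq)

lemma ominus_le_1: "M > 0 \<Longrightarrow> ominus M y x \<le> 1"
  unfolding ominus_def by (simp add: order_trans[OF _ pos_mod_sign[of "int M" "x - y"]])

lemma ominus_ge_minus_1:
  assumes "loc_comp M x y" "M > 0"
  shows "-1 \<le> ominus M y x"
proof -
  have "0 \<le> (x - y) mod int M" "0 \<le> (y - x) mod int M" using assms(2) by simp_all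
  thus ?thesis using assms(1) unfolding ominus_def loc_comp_def by (auto simp: min_def split: if_splits)
qed

lemma delay_snoc:
  "xs \<noteq> [] \<Longrightarrow> delay M c (xs @ [y]) = delay M c xs + ominus M (int (c y)) (int (c (last xs)))"
  by (induction xs rule: induct_list012) auto

text \<open>The delay of a walk telescopes modulo M to the clock difference of its ends.\<close>
lemma delay_mod:
  "xs \<noteq> [] \<Longrightarrow> delay M c xs mod int M = (int (c (last xs)) - int (c (hd xs))) mod int M"
proof (induction xs rule: induct_list012)
  case (3 x y zs)
  have "delay M c (x # y # zs) mod int M
      = (ominus M (int (c y)) (int (c x)) mod int M + delay M c (y # zs) mod int M) mod int M"
    by (simp add: mod_add_eq)
  also have "\<dots> = ((int (c y) - int (c x)) mod int M
                    + (int (c (last (y # zs))) - int (c y)) mod int M) mod int M"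
    using 3 by (simp add: ominus_mod)
  also have "\<dots> = (int (c (last (x # y # zs))) - int (c (hd (x # y # zs)))) mod int M"
    by (simp add: mod_add_eq)
  finally show ?case .
qed simp_all

lemma delay_le_length: "M > 0 \<Longrightarrow> xs \<noteq> [] \<Longrightarrow> delay M c xs \<le> int (length xs) - 1"
proof (induction xs rule: induct_list012)
  case (3 x y zs)
  thus ?case using ominus_le_1[of M "int (c y)" "int (c x)"] by simp
qed auto

lemma idelay_eq_delay: "WU0 V E M c \<Longrightarrow> walk V E p q xs \<Longrightarrow> idelay V E M c p q = delay M c xs"
  unfolding idelay_def WU0_def by (metis (mono_tags, lifting) someI)

lemma lift_base_mod:
  assumes G: "graph_ok V E" and W: "WU0 V E M c" and p0: "p0 \<in> V"
    and p: "p \<in> V" and cM: "c p < M"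
  shows "lift_base V E M c p0 p mod int M = int (c p)"
proof -
  obtain xs where xs: "walk V E p0 p xs" using G p0 p unfolding graph_ok_def by blast
  have ne: "xs \<noteq> []" and ends: "hd xs = p0" "last xs = p" using xs by (auto simp: walk_def)
  have "lift_base V E M c p0 p mod int M = (int (c p0) + delay M c xs mod int M) mod int M"
    using idelay_eq_delay[OF W xs] by (simp add: lift_base_def mod_add_right_eq)
  also have "\<dots> = (int (c p0) + (int (c p) - int (c p0))) mod int M"
    using delay_mod[OF ne, of M c] ends by (simp add: mod_add_right_eq)
  also have "\<dots> = int (c p)" using cM by simp
  finally show ?thesis .
qed

lemma lift_base_edge:
  assumes G: "graph_ok V E" and W: "WU0 V E M c" and p0: "p0 \<in> V" and M0: "M > 0"
    and e: "E p q"
  shows "\<bar>lift_base V E M c p0 p - lift_base V E M c p0 q\<bar> \<le> 1"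
proof -
  have p: "p \<in> V" and q: "q \<in> V" using e G by (auto simp: graph_ok_def)
  obtain xs where xs: "walk V E p0 p xs" using G p0 p unfolding graph_ok_def by blast
  have ne: "xs \<noteq> []" and last: "last xs = p" using xs by (auto simp: walk_def)
  have "lift_base V E M c p0 q - lift_base V E M c p0 p = ominus M (int (c q)) (int (c p))"
    using idelay_eq_delay[OF W xs] idelay_eq_delay[OF W walk_snoc[OF xs e q]]
      delay_snoc[OF ne] last by (simp add: lift_base_def)
  moreover have "loc_comp M (int (c p)) (int (c q))" using W e by (simp add: WU0_def WU_def)
  moreover note ominus_ge_minus_1[OF this M0] ominus_le_1[OF M0, of "int (c q)" "int (c p)"]
  ultimately show ?thesis by linarith
qed

text \<open>A shortest walk from p0 to p has at most D edges and each edge contributes at most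
  one to the delay, so all lifted initial values are at most bot0 + D.\<close>
lemma lift_base_le:
  assumes G: "graph_ok V E" and W: "WU0 V E M c" and p0: "p0 \<in> V" and M0: "M > 0"
    and p: "p \<in> V"
  shows "lift_base V E M c p0 p \<le> int (c p0) + int (diameter V E)"
proof -
  obtain xs where xs: "walk V E p0 p xs" "length xs = Suc (hop_dist V E p0 p)"
    using shortest_walk[OF G p0 p] by blast
  have "delay M c xs \<le> int (hop_dist V E p0 p)"
    using delay_le_length[OF M0, of xs c] xs by (simp add: walk_def)
  thus ?thesis using idelay_eq_delay[OF W xs(1)] hop_dist_le_diameter[OF G p0 p]
    by (simp add: lift_base_def)
qed

section \<open>Lifted executions\<close>

text \<open>Key arithmetic fact: two integers congruent to clocks gp, gq with gap at most one,
  where gq is gp or gp+1 mod M (the enabling condition), satisfy lq = lp or lq = lp + 1.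
  This is where M >= 3 is needed.\<close>
lemma enabled_lifted_neighbour:
  fixes lp lq :: int
  assumes M3: "M \<ge> 3" and hp: "lp mod int M = int gp" and hq: "lq mod int M = int gq"
    and gap: "\<bar>lp - lq\<bar> \<le> 1" and en: "gq = gp \<or> gq = (gp + 1) mod M"
  shows "lq = lp \<or> lq = lp + 1"
proof (rule ccontr)
  assume "\<not> ?thesis"
  hence lq: "lq = lp - 1" using gap by auto
  from en show False
  proof
    assume "gq = gp"
    hence "(lp - 1) mod int M = lp mod int M" using hp hq lq by simp
    hence "int M dvd (lp - 1) - lp" by (simp add: mod_eq_dvd_iff)
    thus False using M3 by simp
  next
    assume "gq = (gp + 1) mod M"
    moreover have "(lp + 1) mod int M = (lp mod int M + 1) mod int M" by (simp add: mod_add_left_eq)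
    ultimately have "int gq = (lp + 1) mod int M" using hp by (simp add: of_nat_mod add.commute)
    hence "int M dvd (lp - 1) - (lp + 1)" using hq lq by (simp add: mod_eq_dvd_iff)
    hence "int M dvd 2" by (simp add: dvd_minus_iff)
    thus False using M3 zdvd_imp_le by fastforce
  qed
qed

locale lifted_execution =
  fixes V :: "'v set" and E :: "'v \<Rightarrow> 'v \<Rightarrow> bool" and M :: nat
    and g :: "nat \<Rightarrow> 'v \<Rightarrow> nat" and sel :: "nat \<Rightarrow> 'v set" and b :: "'v \<Rightarrow> int"
  assumes G: "graph_ok V E" and M3: "M \<ge> 3" and exec: "execution V E M g sel"
    and live: "\<forall>p\<in>V. \<forall>t. \<exists>t'\<ge>t. p \<in> sel t'"
    and b_mod: "\<forall>p\<in>V. b p mod int M = int (g 0 p)"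
    and b_edge: "\<forall>p q. E p q \<longrightarrow> \<bar>b p - b q\<bar> \<le> 1"
begin

abbreviation L :: "'v \<Rightarrow> nat \<Rightarrow> int" where "L p t \<equiv> lifted sel b p t"
abbreviation T :: "'v \<Rightarrow> int \<Rightarrow> nat" where "T p j \<equiv> Ccut sel b j p"
abbreviation precedes :: "'v \<times> nat \<Rightarrow> 'v \<times> nat \<Rightarrow> bool" where
  "precedes \<equiv> (leadsto V E sel)\<^sup>*\<^sup>*"

lemma edge_in_V: "E p q \<Longrightarrow> p \<in> V \<and> q \<in> V" using G by (auto simp: graph_ok_def)
lemma edge_sym: "E p q \<Longrightarrow> E q p" using G by (auto simp: graph_ok_def)

lemma step_facts:
  "p \<in> sel t \<Longrightarrow> enabled E M (g t) p"
  "g (Suc t) p = (if p \<in> sel t then (g t p + 1) mod M else g t p)"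
  using exec by (auto simp: execution_def transition_def)

definition lift_consistent :: "nat \<Rightarrow> bool" where
  "lift_consistent t \<longleftrightarrow> (\<forall>p\<in>V. L p t mod int M = int (g t p)) \<and>
     (\<forall>p q. E p q \<longrightarrow> \<bar>L p t - L q t\<bar> \<le> 1)"

lemma selected_neighbour_cases:
  "lift_consistent t \<Longrightarrow> p \<in> sel t \<Longrightarrow> E p q \<Longrightarrow> L q t = L p t \<or> L q t = L p t + 1"
  by (rule enabled_lifted_neighbour[OF M3, where gp = "g t p" and gq = "g t q"])
    (use edge_in_V[of p q] step_facts(1)[of p t] in \<open>auto simp: lift_consistent_def enabled_def\<close>)

lemma lift_consistent: "lift_consistent t"
proof (induction t)
  case 0 show ?case using b_mod b_edge by (simp add: lift_consistent_def)
next
  case (Suc t)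
  have "L p (Suc t) mod int M = int (g (Suc t) p)" if p: "p \<in> V" for p
  proof -
    have "L p t mod int M = int (g t p)" using Suc p by (simp add: lift_consistent_def)
    moreover have "(L p t + 1) mod int M = (L p t mod int M + 1) mod int M"
      by (simp add: mod_add_left_eq)
    ultimately show ?thesis by (simp add: step_facts(2) of_nat_mod add.commute)
  qed
  moreover have "\<bar>L p (Suc t) - L q (Suc t)\<bar> \<le> 1" if e: "E p q" for p q
    using Suc e selected_neighbour_cases[OF Suc _ e] selected_neighbour_cases[OF Suc _ edge_sym[OF e]]
    by (auto simp: lift_consistent_def)
  ultimately show ?case by (simp add: lift_consistent_def)
qed

lemma selected_neighbour:
  "p \<in> sel t \<Longrightarrow> E p q \<Longrightarrow> L q t = L p t \<or> L q t = L p t + 1"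
  using selected_neighbour_cases[OF lift_consistent] .

lemma neighbour_le: "E p q \<Longrightarrow> L q t \<le> L p t + 1"
  using lift_consistent[of t] by (force simp: lift_consistent_def)

lemma L_mono: "t1 \<le> t2 \<Longrightarrow> L p t1 \<le> L p t2"
  by (induction t2 rule: dec_induct) auto

lemma L_ge_b: "b p \<le> L p t" using L_mono[of 0 t p] by simp

text \<open>Lifted clocks move by steps of one, so they take every intermediate value.\<close>
lemma L_intermediate: "t1 \<le> t2 \<Longrightarrow> L p t1 \<le> v \<Longrightarrow> v \<le> L p t2 \<Longrightarrow> \<exists>s\<le>t2. L p s = v"
proof (induction t2 rule: dec_induct)
  case (step n)
  show ?case
  proof (cases "v \<le> L p n")
    case True thus ?thesis using step by (meson le_Suc_eq)
  next
    case False
    hence "v = L p (Suc n)" using step by (auto split: if_splits)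
    thus ?thesis by blast
  qed
qed auto

text \<open>By liveness lifted clocks are unbounded, hence reach every value above b p.\<close>
lemma L_unbounded: "p \<in> V \<Longrightarrow> \<exists>t. b p + int n \<le> L p t"
proof (induction n)
  case 0 show ?case using L_ge_b by auto
next
  case (Suc n)
  then obtain t where t: "b p + int n \<le> L p t" by auto
  obtain t' where t': "t' \<ge> t" "p \<in> sel t'" using live Suc.prems by blast
  have "b p + int (Suc n) \<le> L p (Suc t')" using t t' L_mono[of t t' p] by simp
  thus ?case by blast
qed

lemma L_reaches:
  assumes p: "p \<in> V" and j: "b p \<le> j"
  shows "\<exists>t. L p t = j"
proof -
  obtain t where "b p + int (nat (j - b p)) \<le> L p t" using L_unbounded[OF p] by blast
  hence "j \<le> L p t" using j by simp
  thus ?thesis using L_intermediate[of 0 t p j] j by auto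
qed

lemma T_val: "p \<in> V \<Longrightarrow> b p \<le> j \<Longrightarrow> L p (T p j) = j"
  unfolding Ccut_def by (metis (mono_tags, lifting) L_reaches LeastI)

lemma T_le_iff: "p \<in> V \<Longrightarrow> b p \<le> j \<Longrightarrow> T p j \<le> t \<longleftrightarrow> j \<le> L p t"
proof
  assume "p \<in> V" "b p \<le> j" "T p j \<le> t"
  thus "j \<le> L p t" using T_val L_mono by metis
next
  assume "p \<in> V" "b p \<le> j" "j \<le> L p t"
  then obtain s where s: "s \<le> t" "L p s = j" using L_intermediate[of 0 t p j] L_ge_b[of p 0] by auto
  have "T p j \<le> s" unfolding Ccut_def by (rule Least_le) (rule s(2))
  thus "T p j \<le> t" using s by simp
qed

lemma T_mono: "p \<in> V \<Longrightarrow> b p \<le> j1 \<Longrightarrow> j1 \<le> j2 \<Longrightarrow> T p j1 \<le> T p j2"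
  using T_le_iff T_val by simp

lemma T_event: "p \<in> V \<Longrightarrow> b p \<le> j \<Longrightarrow> event V sel p (T p j)"
proof (cases "T p j")
  case (Suc s)
  assume p: "p \<in> V" and j: "b p \<le> j"
  have "L p s < j" using T_le_iff[OF p j, of s] Suc by simp
  moreover have "L p (Suc s) = j" using T_val[OF p j] Suc by simp
  ultimately have "p \<in> sel s" by (auto split: if_splits)
  thus ?thesis using p Suc by (simp add: event_def)
qed (simp add: event_def)

lemma T_of_event: "event V sel p t \<Longrightarrow> T p (L p t) = t"
proof -
  assume ev: "event V sel p t"
  hence p: "p \<in> V" by (simp add: event_def)
  have le: "T p (L p t) \<le> t" using T_le_iff[OF p L_ge_b] by simp
  show ?thesis
  proof (cases t)
    case (Suc s)
    hence "L p s < L p t" using ev by (simp add: event_def)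
    hence "\<not> T p (L p t) \<le> s" using T_le_iff[OF p L_ge_b] by simp
    thus ?thesis using le Suc by simp
  qed (use le in simp)
qed

subsection \<open>Causality\<close>

text \<open>Before every positive time there is a last event of p (time 0 is always one).\<close>
lemma last_event_before:
  assumes p: "p \<in> V" and t: "0 < t"
  obtains u where "u < t" "event V sel p u" "\<And>s. s < t \<Longrightarrow> event V sel p s \<Longrightarrow> s \<le> u"
proof -
  let ?S = "{u. u < t \<and> event V sel p u}"
  have fin: "finite ?S" by simp
  have "0 \<in> ?S" using p t by (simp add: event_def)
  hence "Max ?S \<in> ?S" using Max_in[OF fin] by blast
  moreover have "\<And>s. s \<in> ?S \<Longrightarrow> s \<le> Max ?S" using Max_ge[OF fin] by blast
  ultimately show ?thesis using that by blast
qed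

lemma leadsto_last_event:
  assumes "E p q \<or> q = p" "event V sel p t" "u < t" "event V sel q u"
    "\<And>s. s < t \<Longrightarrow> event V sel q s \<Longrightarrow> s \<le> u"
  shows "leadsto V E sel (q, u) (p, t)"
  using assms by (force simp: leadsto_def)

lemma same_process_precedes:
  "event V sel p t1 \<Longrightarrow> event V sel p t2 \<Longrightarrow> t1 \<le> t2 \<Longrightarrow> precedes (p, t1) (p, t2)"
proof (induction t2 rule: less_induct)
  case (less t2)
  show ?case
  proof (cases "t1 = t2")
    case False
    hence lt: "t1 < t2" using less.prems(3) by simp
    have p: "p \<in> V" using less.prems(1) by (simp add: event_def)
    obtain u where u: "u < t2" "event V sel p u" "\<And>s. s < t2 \<Longrightarrow> event V sel p s \<Longrightarrow> s \<le> u"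
      using last_event_before[OF p] lt by (metis gr_zeroI not_less0)
    have "precedes (p, t1) (p, u)" using less.IH[OF u(1) less.prems(1) u(2)] u(3) less.prems(1) lt
      by blast
    moreover have "leadsto V E sel (p, u) (p, t2)"
      using leadsto_last_event[OF _ less.prems(2) u] by simp
    ultimately show ?thesis by simp
  qed simp
qed

lemma precedes_lifted_mono: "precedes x y \<Longrightarrow> L (fst x) (snd x) \<le> L (fst y) (snd y)"
proof (induction rule: rtranclp_induct)
  case (step y z)
  obtain q t' p t where yz: "y = (q, t')" "z = (p, t)" by fastforce
  have l: "leadsto V E sel (q, t') (p, t)" using step yz by simp
  have "L q t' \<le> L p t"
  proof (cases "q = p")
    case True thus ?thesis using l L_mono by (simp add: leadsto_def)
  next
    case False
    hence e: "E p q" "t' < t" "event V sel p t" using l by (auto simp: leadsto_def)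
    then obtain s where s: "t = Suc s" "p \<in> sel s" by (auto simp: event_def)
    have "L q t' \<le> L q s" using L_mono e s by simp
    also have "\<dots> \<le> L p s + 1" using neighbour_le[OF e(1)] .
    finally show ?thesis using s by simp
  qed
  thus ?case using step yz by simp
qed simp

lemma edge_precedes:
  assumes e: "E p q" and bp: "b p < j" and bq: "b q \<le> j - 1"
  shows "precedes (q, T q (j - 1)) (p, T p j)"
proof -
  have p: "p \<in> V" and q: "q \<in> V" using edge_in_V[OF e] by auto
  have Lt: "L p (T p j) = j" using T_val[OF p] bp by simp
  then obtain s where s: "T p j = Suc s" using bp by (cases "T p j") auto
  have "L p s < j" using T_le_iff[OF p, of j s] bp s by simp
  hence ps: "p \<in> sel s" and Ls: "L p s = j - 1" using Lt s by (auto split: if_splits)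
  have "j - 1 \<le> L q s" using selected_neighbour[OF ps e] Ls by auto
  hence Tq: "T q (j - 1) \<le> s" using T_le_iff[OF q bq] by simp
  obtain u where u: "u < T p j" "event V sel q u"
      "\<And>s'. s' < T p j \<Longrightarrow> event V sel q s' \<Longrightarrow> s' \<le> u"
    using last_event_before[OF q] s by (metis zero_less_Suc)
  have evq: "event V sel q (T q (j - 1))" using T_event[OF q bq] .
  have "T q (j - 1) \<le> u" using u(3) evq Tq s by simp
  hence "precedes (q, T q (j - 1)) (q, u)" using same_process_precedes evq u(2) by blast
  moreover have "leadsto V E sel (q, u) (p, T p j)"
    using leadsto_last_event[OF _ T_event[OF p] u] e bp by simp
  ultimately show ?thesis by simp
qed

lemma walk_precedes:
  assumes bK: "\<forall>z\<in>V. b z \<le> K"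
  shows "walk V E x y xs \<Longrightarrow> length xs = Suc n \<Longrightarrow> K + int n \<le> j \<Longrightarrow>
     precedes (y, T y (j - int n)) (x, T x j)"
proof (induction xs arbitrary: x n j)
  case (Cons x0 rest)
  have x: "x0 = x" "x \<in> V" using Cons.prems by (auto simp: walk_def)
  show ?case
  proof (cases rest)
    case Nil
    thus ?thesis using Cons.prems x by (auto simp: walk_def)
  next
    case (Cons x' rest')
    have e: "E x x'" and w: "walk V E x' y rest" using Cons.prems x Cons by (auto simp: walk_def)
    obtain m where n: "n = Suc m" using Cons.prems Cons by (cases n) auto
    have "precedes (y, T y (j - 1 - int m)) (x', T x' (j - 1))"
      using Cons.IH[OF w, of m "j - 1"] Cons.prems n Cons by simp
    moreover have "precedes (x', T x' (j - 1)) (x, T x j)"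
      using edge_precedes[OF e] bK x edge_in_V[OF e] Cons.prems n by force
    ultimately show ?thesis using n by (simp add: algebra_simps)
  qed
qed (simp add: walk_def)

text \<open>A cut C_j above all initial values is coherent: whatever precedes C_j at p has
  lifted value at most j, hence happens before q reaches j.\<close>
lemma cut_coherent:
  assumes bj: "\<forall>q\<in>V. b q \<le> j"
  shows "coherent V E sel (Ccut sel b j)"
  unfolding coherent_def is_cut_def
proof (intro conjI ballI allI impI)
  fix p assume "p \<in> V"
  thus "event V sel p (T p j)" using T_event bj by simp
next
  fix p q t t'
  assume p: "p \<in> V" and q: "q \<in> V"
    and c1: "causal V E sel (q, t') (p, t)" and c2: "causal V E sel (p, t) (p, T p j)"
  have evq: "event V sel q t'" using c1 by (simp add: causal_def)
  have "precedes (q, t') (p, T p j)" using c1 c2 by (auto simp: causal_def)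
  hence "L q t' \<le> j" using precedes_lifted_mono T_val[OF p] bj p by fastforce
  hence "t' \<le> T q j" using T_mono[OF q L_ge_b] T_of_event[OF evq] by metis
  thus "causal V E sel (q, t') (q, T q j)"
    using same_process_precedes[OF evq T_event[OF q]] bj q evq by (simp add: causal_def)
qed

lemma cut_le_higher:
  assumes bj: "\<forall>q\<in>V. b q \<le> j" and "j \<le> j'"
  shows "cut_le V sel (Ccut sel b j) (Ccut sel b j')"
  unfolding cut_le_def using T_mono bj assms(2) le_trans by blast

lemma cut_in_segment:
  assumes bj: "\<forall>q\<in>V. b q \<le> j" and q: "q \<in> V" and i: "j \<le> i" "i \<le> j'"
  shows "(q, T q i) \<in> segment V E sel (Ccut sel b j) (Ccut sel b j')"
proof -
  have bq: "b q \<le> j" using bj q by simp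
  have "event V sel q (T q j)" "event V sel q (T q i)" "event V sel q (T q j')"
    using T_event[OF q] bq i by simp_all
  moreover have "T q j \<le> T q i" "T q i \<le> T q j'" using T_mono[OF q] bq i by simp_all
  ultimately show ?thesis unfolding segment_def causal_def using same_process_precedes q by simp
qed

text \<open>The witness for a process q at distance d <= rho from p is the event at
  which q reached j + rho - d.\<close>
lemma cut_wavelet:
  assumes bK: "\<forall>z\<in>V. b z \<le> K" and Kk: "K \<le> k" and V0: "p0 \<in> V"
  shows "wavelet V E sel \<rho> (Ccut sel b k) (Ccut sel b (k + int \<rho>))
            {(p, Ccut sel b (k + int \<rho>) p) | p. p \<in> V}"
  unfolding wavelet_def
proof (intro conjI)
  have bk: "\<forall>q\<in>V. b q \<le> k" using bK Kk by force
  moreover have "\<forall>q\<in>V. b q \<le> k + int \<rho>" using bk by force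
  ultimately show "coherent V E sel (Ccut sel b k)" "coherent V E sel (Ccut sel b (k + int \<rho>))"
    "cut_le V sel (Ccut sel b k) (Ccut sel b (k + int \<rho>))"
    by (simp_all add: cut_coherent cut_le_higher)
  show "{(p, Ccut sel b (k + int \<rho>) p) | p. p \<in> V} \<noteq> {}" using V0 by auto
  show "{(p, Ccut sel b (k + int \<rho>) p) | p. p \<in> V}
          \<subseteq> segment V E sel (Ccut sel b k) (Ccut sel b (k + int \<rho>))"
    using cut_in_segment[OF bk] by auto
  show "\<forall>(p, t)\<in>{(p, Ccut sel b (k + int \<rho>) p) | p. p \<in> V}. \<forall>q\<in>V. hop_dist V E p q \<le> \<rho> \<longrightarrow>
      (\<exists>t'. (q, t') \<in> segment V E sel (Ccut sel b k) (Ccut sel b (k + int \<rho>))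
          \<and> causal V E sel (q, t') (p, t))"
  proof (clarify)
    fix p q assume p: "p \<in> V" and q: "q \<in> V" and h: "hop_dist V E p q \<le> \<rho>"
    define d where "d = hop_dist V E p q"
    obtain xs where xs: "walk V E p q xs" "length xs = Suc d"
      using shortest_walk[OF G p q] d_def by blast
    let ?t' = "T q (k + int \<rho> - int d)"
    have "precedes (q, ?t') (p, T p (k + int \<rho>))"
      using walk_precedes[OF bK xs] Kk h d_def by simp
    moreover have "(q, ?t') \<in> segment V E sel (Ccut sel b k) (Ccut sel b (k + int \<rho>))"
      using cut_in_segment[OF bk q] h d_def by simp
    ultimately show "\<exists>t'. (q, t') \<in> segment V E sel (Ccut sel b k) (Ccut sel b (k + int \<rho>))
          \<and> causal V E sel (q, t') (p, Ccut sel b (k + int \<rho>) p)"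
      by (auto simp: segment_def causal_def)
  qed
qed

end

theorem theorem1:
  fixes V :: "'v set" and E :: "'v \<Rightarrow> 'v \<Rightarrow> bool" and M :: nat
    and g :: "nat \<Rightarrow> 'v \<Rightarrow> nat" and sel :: "nat \<Rightarrow> 'v set"
    and p0 :: 'v and k :: int and \<rho> :: nat
  assumes "graph_ok V E"
    and "M \<ge> 3"
    and "execution V E M g sel"
    and "WU0 V E M (g 0)"
    and "\<forall>p\<in>V. \<forall>t. \<exists>t'\<ge>t. p \<in> sel t'"
    and "p0 \<in> V" and "\<forall>q\<in>V. idelay V E M (g 0) p0 q \<ge> 0"
    and "k \<ge> int (g 0 p0) + int (diameter V E)"
    and "\<rho> \<ge> 1"
  shows "coherent V E sel (Ccut sel (lift_base V E M (g 0) p0) k)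
       \<and> coherent V E sel (Ccut sel (lift_base V E M (g 0) p0) (k + int \<rho>))
       \<and> cut_le V sel (Ccut sel (lift_base V E M (g 0) p0) k)
                      (Ccut sel (lift_base V E M (g 0) p0) (k + int \<rho>))
       \<and> wavelet V E sel \<rho> (Ccut sel (lift_base V E M (g 0) p0) k)
            (Ccut sel (lift_base V E M (g 0) p0) (k + int \<rho>))
            {(p, Ccut sel (lift_base V E M (g 0) p0) (k + int \<rho>) p) | p. p \<in> V}"
proof -
  note G = assms(1) and W = assms(4) and p0 = assms(6)
  have M0: "M > 0" using assms(2) by simp
  have gM: "\<forall>p\<in>V. g 0 p < M" using assms(3) by (simp add: execution_def)
  interpret lifted_execution V E M g sel "lift_base V E M (g 0) p0"
    using G assms(2,3,5) lift_base_mod[OF G W p0] lift_base_edge[OF G W p0 M0] gM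
    by unfold_locales auto
  have "wavelet V E sel \<rho> (Ccut sel (lift_base V E M (g 0) p0) k)
            (Ccut sel (lift_base V E M (g 0) p0) (k + int \<rho>))
            {(p, Ccut sel (lift_base V E M (g 0) p0) (k + int \<rho>) p) | p. p \<in> V}"
    using cut_wavelet[OF _ assms(8) p0] lift_base_le[OF G W p0 M0] by blast
  thus ?thesis unfolding wavelet_def by blast
qed

end
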